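(* Let $\lambda$ be any one of the four functions $\mu,\mu^*,\nu,\nu^*$. Then for all positive integers $n_1,n_2,m$ (with additionally $n_1,n_2\ge m$ when $\lambda=\mu^*$ or $\lambda=\nu^*$), $$\lambda(n_1+n_2,m)\le \lambda(n_1,m)+\lambda(n_2,m).$$
   Context: Let $\mathbb F_2=\{0,1\}$ be the field with two elements. For $u\in\mathbb F_2^n$, $|u|$ denotes the Hamming weight of $u$. A wiring on $n$ vertices is a matrix $W=(w_{i,j})\in M(n,n;\mathbb F_2)$ with $w_{i,i}=1$ for all $i$. The degree of vertex $j$ is the number of $1$s in the $j$th column of $W$, and $\deg(W)$ is the maximum degree over all vertices. For $c\in\mathbb F_2^n$, $M(W,c)=\max\{|Wx+c| : x\in\mathbb F_2^n\}$. For $n,m\ge1$, $A(n,m)$ is the set of wirings on $n$ vertices with $\deg(W)\le m$; for $n\ge m$, $A^*(n,m)$ is the set of wirings on $n$ vertices in which every vertex has degree exactly $m$. Define $\mu(n,m)=\min\{M(W,0): W\in A(n,m)\}$, $\nu(n,m)=\min\{M(W,c): W\in A(n,m),\ c\in\mathbb F_2^n\}$, and for $n\ge m$, $\mu^*(n,m)=\min\{M(W,0): W\in A^*(n,m)\}$, $\nu^*(n,m)=\min\{M(W,c): W\in A^*(n,m),\ c\in\mathbb F_2^n\}$. *)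

theory Defs
  imports Main "HOL-Library.Z2"
begin

text \<open>Vectors in F_2^n are functions nat => bit vanishing at indices >= n;
  n x n matrices over F_2 are functions nat => nat => bit vanishing outside {0..<n} x {0..<n}.\<close>

definition vecs :: "nat \<Rightarrow> (nat \<Rightarrow> bit) set" where
  "vecs n = {x. \<forall>i. n \<le> i \<longrightarrow> x i = 0}"

definition mats :: "nat \<Rightarrow> (nat \<Rightarrow> nat \<Rightarrow> bit) set" where
  "mats n = {W. \<forall>i j. (n \<le> i \<or> n \<le> j) \<longrightarrow> W i j = 0}"

definition hweight :: "nat \<Rightarrow> (nat \<Rightarrow> bit) \<Rightarrow> nat" where
  "hweight n u = card {i. i < n \<and> u i \<noteq> 0}"

definition mat_vec_aff :: "nat \<Rightarrow> (nat \<Rightarrow> nat \<Rightarrow> bit) \<Rightarrow> (nat \<Rightarrow> bit) \<Rightarrow> (nat \<Rightarrow> bit) \<Rightarrow> (nat \<Rightarrow> bit)" where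
  "mat_vec_aff n W x c = (\<lambda>i. if i < n then (\<Sum>j<n. W i j * x j) + c i else 0)"

definition wiring :: "nat \<Rightarrow> (nat \<Rightarrow> nat \<Rightarrow> bit) \<Rightarrow> bool" where
  "wiring n W \<longleftrightarrow> W \<in> mats n \<and> (\<forall>i<n. W i i = 1)"

definition vdeg :: "nat \<Rightarrow> (nat \<Rightarrow> nat \<Rightarrow> bit) \<Rightarrow> nat \<Rightarrow> nat" where
  "vdeg n W j = card {i. i < n \<and> W i j = 1}"

definition wdeg :: "nat \<Rightarrow> (nat \<Rightarrow> nat \<Rightarrow> bit) \<Rightarrow> nat" where
  "wdeg n W = Max (vdeg n W ` {..<n})"

definition MW :: "nat \<Rightarrow> (nat \<Rightarrow> nat \<Rightarrow> bit) \<Rightarrow> (nat \<Rightarrow> bit) \<Rightarrow> nat" where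
  "MW n W c = Max ((\<lambda>x. hweight n (mat_vec_aff n W x c)) ` vecs n)"

definition Aset :: "nat \<Rightarrow> nat \<Rightarrow> (nat \<Rightarrow> nat \<Rightarrow> bit) set" where
  "Aset n m = {W. wiring n W \<and> wdeg n W \<le> m}"

definition Astar :: "nat \<Rightarrow> nat \<Rightarrow> (nat \<Rightarrow> nat \<Rightarrow> bit) set" where
  "Astar n m = {W. wiring n W \<and> (\<forall>j<n. vdeg n W j = m)}"

definition mu :: "nat \<Rightarrow> nat \<Rightarrow> nat" where
  "mu n m = Min ((\<lambda>W. MW n W (\<lambda>_. 0)) ` Aset n m)"

definition nu :: "nat \<Rightarrow> nat \<Rightarrow> nat" where
  "nu n m = Min ((\<lambda>(W, c). MW n W c) ` (Aset n m \<times> vecs n))"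

definition mu_star :: "nat \<Rightarrow> nat \<Rightarrow> nat" where
  "mu_star n m = Min ((\<lambda>W. MW n W (\<lambda>_. 0)) ` Astar n m)"

definition nu_star :: "nat \<Rightarrow> nat \<Rightarrow> nat" where
  "nu_star n m = Min ((\<lambda>(W, c). MW n W c) ` (Astar n m \<times> vecs n))"

end

theory Submission
  imports Defs
begin

text \<open>If W1 and W2 attain the minimum for n1 and n2 vertices, the block-diagonal wiring
  diag(W1, W2) on n1 + n2 vertices (with the concatenated translation vector) decouples:
  its output is the concatenation of the two outputs, so its Hamming weight is the sum of
  two weights, each at most the corresponding maximum. Block-diagonal sums preserve the
  column degrees, hence stay within each of the four classes; nonemptiness of the classes
  is witnessed by the band (circulant) wirings with m consecutive ones in every column.\<close>

definition block_diag :: "nat \<Rightarrow> (nat \<Rightarrow> nat \<Rightarrow> bit) \<Rightarrow> (nat \<Rightarrow> nat \<Rightarrow> bit) \<Rightarrow> (nat \<Rightarrow> nat \<Rightarrow> bit)" where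
  "block_diag n1 W1 W2 i j =
    (if i < n1 \<and> j < n1 then W1 i j
     else if n1 \<le> i \<and> n1 \<le> j then W2 (i - n1) (j - n1) else 0)"

definition vec_append :: "nat \<Rightarrow> (nat \<Rightarrow> bit) \<Rightarrow> (nat \<Rightarrow> bit) \<Rightarrow> (nat \<Rightarrow> bit)" where
  "vec_append n1 c1 c2 i = (if i < n1 then c1 i else c2 (i - n1))"

definition circulant :: "nat \<Rightarrow> nat \<Rightarrow> (nat \<Rightarrow> nat \<Rightarrow> bit)" where
  "circulant n m i j =
    (if i < n \<and> j < n \<and> (if j \<le> i then i - j else i + n - j) < m then 1 else 0)"

lemma sum_lessThan_add_split:
  "(\<Sum>j<n1 + n2. f j) = (\<Sum>j<n1. f j) + (\<Sum>k<n2. f (n1 + k :: nat))"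
  by (induction n2) (auto simp: add.assoc)

lemma card_shift_image: "card ((\<lambda>k. n + k) ` A) = card (A :: nat set)"
  by (rule card_image) (simp add: inj_on_def)

lemma Collect_less_add_split:
  "{i. i < n1 + n2 \<and> P i} = {i. i < n1 \<and> P i} \<union> (\<lambda>k. n1 + k) ` {k. k < n2 \<and> P (n1 + k)}"
  for n1 n2 :: nat
proof (intro equalityI subsetI)
  fix i assume "i \<in> {i. i < n1 + n2 \<and> P i}"
  then show "i \<in> {i. i < n1 \<and> P i} \<union> (\<lambda>k. n1 + k) ` {k. k < n2 \<and> P (n1 + k)}"
    by (cases "i < n1") (auto simp: image_iff intro!: exI[of _ "i - n1"])
qed auto

lemma hweight_le: "hweight n u \<le> n"
proof -
  have "hweight n u \<le> card {..<n}"
    unfolding hweight_def by (rule card_mono) auto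
  then show ?thesis by simp
qed

lemma hweight_cong: "(\<And>i. i < n \<Longrightarrow> u i = v i) \<Longrightarrow> hweight n u = hweight n v"
  unfolding hweight_def by (rule arg_cong[where f = card]) auto

lemma hweight_add_split:
  "hweight (n1 + n2) y = hweight n1 y + hweight n2 (\<lambda>k. y (n1 + k))"
proof -
  have "card ({i. i < n1 \<and> y i \<noteq> 0} \<union> (\<lambda>k. n1 + k) ` {k. k < n2 \<and> y (n1 + k) \<noteq> 0})
      = card {i. i < n1 \<and> y i \<noteq> 0} + card ((\<lambda>k. n1 + k) ` {k. k < n2 \<and> y (n1 + k) \<noteq> 0})"
    by (rule card_Un_disjoint) auto
  then show ?thesis
    unfolding hweight_def Collect_less_add_split[of n1 n2] card_shift_image .
qed

lemma finite_MW_values: "finite ((\<lambda>x. hweight n (mat_vec_aff n W x c)) ` vecs n)"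
  by (rule finite_subset[of _ "{..n}"]) (auto simp: hweight_le)

lemma MW_values_nonempty: "(\<lambda>x. hweight n (mat_vec_aff n W x c)) ` vecs n \<noteq> {}"
  unfolding vecs_def by auto

lemma hweight_le_MW: "x \<in> vecs n \<Longrightarrow> hweight n (mat_vec_aff n W x c) \<le> MW n W c"
  unfolding MW_def by (rule Max_ge[OF finite_MW_values]) auto

lemma MW_le: "MW n W c \<le> n"
  unfolding MW_def by (subst Max_le_iff[OF finite_MW_values MW_values_nonempty]) (auto simp: hweight_le)

lemma mat_vec_aff_block_diag_left:
  assumes "i < n1"
  shows "mat_vec_aff (n1 + n2) (block_diag n1 W1 W2) x (vec_append n1 c1 c2) i
       = mat_vec_aff n1 W1 (\<lambda>j. if j < n1 then x j else 0) c1 i"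
  using assms by (simp add: mat_vec_aff_def vec_append_def block_diag_def sum_lessThan_add_split)

lemma mat_vec_aff_block_diag_right:
  assumes "i < n2"
  shows "mat_vec_aff (n1 + n2) (block_diag n1 W1 W2) x (vec_append n1 c1 c2) (n1 + i)
       = mat_vec_aff n2 W2 (\<lambda>j. if j < n2 then x (n1 + j) else 0) c2 i"
  using assms by (simp add: mat_vec_aff_def vec_append_def block_diag_def sum_lessThan_add_split)

lemma MW_block_diag_le:
  "MW (n1 + n2) (block_diag n1 W1 W2) (vec_append n1 c1 c2) \<le> MW n1 W1 c1 + MW n2 W2 c2"
  unfolding MW_def [of "n1 + n2"]
proof (subst Max_le_iff[OF finite_MW_values MW_values_nonempty], safe)
  fix x :: "nat \<Rightarrow> bit"
  define x1 where "x1 = (\<lambda>j. if j < n1 then x j else 0)"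
  define x2 where "x2 = (\<lambda>j. if j < n2 then x (n1 + j) else 0)"
  have "x1 \<in> vecs n1" "x2 \<in> vecs n2"
    unfolding x1_def x2_def vecs_def by auto
  moreover have "hweight (n1 + n2) (mat_vec_aff (n1 + n2) (block_diag n1 W1 W2) x (vec_append n1 c1 c2))
      = hweight n1 (mat_vec_aff n1 W1 x1 c1) + hweight n2 (mat_vec_aff n2 W2 x2 c2)"
    unfolding hweight_add_split x1_def x2_def
    by (intro arg_cong2[where f = "(+)"] hweight_cong)
       (simp_all add: mat_vec_aff_block_diag_left mat_vec_aff_block_diag_right)
  ultimately show "hweight (n1 + n2) (mat_vec_aff (n1 + n2) (block_diag n1 W1 W2) x (vec_append n1 c1 c2))
      \<le> MW n1 W1 c1 + MW n2 W2 c2"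
    using hweight_le_MW by (simp add: add_mono)
qed

lemma vec_append_vecs: "c1 \<in> vecs n1 \<Longrightarrow> c2 \<in> vecs n2 \<Longrightarrow> vec_append n1 c1 c2 \<in> vecs (n1 + n2)"
  unfolding vecs_def vec_append_def by auto

lemma vec_append_zero: "vec_append n1 (\<lambda>_. 0) (\<lambda>_. 0) = (\<lambda>_. 0)"
  unfolding vec_append_def by auto

lemma wiring_block_diag: "wiring n1 W1 \<Longrightarrow> wiring n2 W2 \<Longrightarrow> wiring (n1 + n2) (block_diag n1 W1 W2)"
  unfolding wiring_def mats_def block_diag_def by auto

lemma vdeg_block_diag_left:
  assumes "W1 \<in> mats n1" "j < n1"
  shows "vdeg (n1 + n2) (block_diag n1 W1 W2) j = vdeg n1 W1 j"
proof -
  have "{i. i < n1 + n2 \<and> block_diag n1 W1 W2 i j = 1} = {i. i < n1 \<and> W1 i j = 1}"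
    using assms by (auto simp: block_diag_def mats_def)
  then show ?thesis unfolding vdeg_def by simp
qed

lemma vdeg_block_diag_right:
  assumes "W2 \<in> mats n2" "n1 \<le> j"
  shows "vdeg (n1 + n2) (block_diag n1 W1 W2) j = vdeg n2 W2 (j - n1)"
proof -
  have "{i. i < n1 + n2 \<and> block_diag n1 W1 W2 i j = 1}
      = (\<lambda>k. n1 + k) ` {i. i < n2 \<and> W2 i (j - n1) = 1}"
    using assms unfolding Collect_less_add_split[of n1 n2] by (auto simp: block_diag_def)
  then show ?thesis unfolding vdeg_def by (simp add: card_shift_image)
qed

lemma vdeg_le_wdeg: "j < n \<Longrightarrow> vdeg n W j \<le> wdeg n W"
  unfolding wdeg_def by (rule Max_ge) auto

lemma wdeg_le_iff: "0 < n \<Longrightarrow> wdeg n W \<le> m \<longleftrightarrow> (\<forall>j<n. vdeg n W j \<le> m)"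
  unfolding wdeg_def by (subst Max_le_iff) auto

lemma Aset_iff: "W \<in> Aset n m \<longleftrightarrow> wiring n W \<and> (\<forall>j<n. vdeg n W j \<le> m)" if "0 < n"
  unfolding Aset_def using wdeg_le_iff[OF that] by simp

lemma block_diag_Aset:
  assumes "W1 \<in> Aset n1 m" "W2 \<in> Aset n2 m" "0 < n1 + n2"
  shows "block_diag n1 W1 W2 \<in> Aset (n1 + n2) m"
proof -
  have w: "wiring n1 W1" "wiring n2 W2" and deg: "\<forall>j<n1. vdeg n1 W1 j \<le> m" "\<forall>j<n2. vdeg n2 W2 j \<le> m"
    using assms(1,2) vdeg_le_wdeg[of _ n1 W1] vdeg_le_wdeg[of _ n2 W2]
    unfolding Aset_def by (auto intro: order_trans)
  have "vdeg (n1 + n2) (block_diag n1 W1 W2) j \<le> m" if "j < n1 + n2" for j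
    using that deg w vdeg_block_diag_left[of W1 n1 j n2 W2] vdeg_block_diag_right[of W2 n2 n1 j W1]
    by (cases "j < n1") (auto simp: wiring_def)
  then show ?thesis
    using Aset_iff[OF assms(3)] wiring_block_diag[OF w] by simp
qed

lemma block_diag_Astar:
  assumes "W1 \<in> Astar n1 m" "W2 \<in> Astar n2 m"
  shows "block_diag n1 W1 W2 \<in> Astar (n1 + n2) m"
proof -
  have w: "wiring n1 W1" "wiring n2 W2"
    using assms unfolding Astar_def by auto
  have "vdeg (n1 + n2) (block_diag n1 W1 W2) j = m" if "j < n1 + n2" for j
    using that assms w vdeg_block_diag_left[of W1 n1 j n2 W2] vdeg_block_diag_right[of W2 n2 n1 j W1]
    by (cases "j < n1") (auto simp: wiring_def Astar_def)
  then show ?thesis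
    using wiring_block_diag[OF w] unfolding Astar_def by simp
qed

lemma Min_MW_block_diag_le:
  assumes "S1 \<noteq> {}" "S2 \<noteq> {}"
    and closed: "\<And>W1 c1 W2 c2. (W1, c1) \<in> S1 \<Longrightarrow> (W2, c2) \<in> S2 \<Longrightarrow>
      (block_diag n1 W1 W2, vec_append n1 c1 c2) \<in> S"
  shows "Min ((\<lambda>(W, c). MW (n1 + n2) W c) ` S)
    \<le> Min ((\<lambda>(W, c). MW n1 W c) ` S1) + Min ((\<lambda>(W, c). MW n2 W c) ` S2)"
proof -
  have fin: "finite ((\<lambda>(W, c). MW n W c) ` T)" for n T
    by (rule finite_subset[of _ "{..n}"]) (auto simp: MW_le)
  obtain W1 c1 where S1: "(W1, c1) \<in> S1" "Min ((\<lambda>(W, c). MW n1 W c) ` S1) = MW n1 W1 c1"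
    using Min_in[OF fin, of n1 S1] assms(1) by auto
  obtain W2 c2 where S2: "(W2, c2) \<in> S2" "Min ((\<lambda>(W, c). MW n2 W c) ` S2) = MW n2 W2 c2"
    using Min_in[OF fin, of n2 S2] assms(2) by auto
  have "Min ((\<lambda>(W, c). MW (n1 + n2) W c) ` S)
      \<le> MW (n1 + n2) (block_diag n1 W1 W2) (vec_append n1 c1 c2)"
    using Min_le[OF fin] closed[OF S1(1) S2(1)] by force
  also have "\<dots> \<le> MW n1 W1 c1 + MW n2 W2 c2"
    by (rule MW_block_diag_le)
  finally show ?thesis
    using S1(2) S2(2) by simp
qed

lemma mu_eq_Min_pairs: "mu n m = Min ((\<lambda>(W, c). MW n W c) ` (Aset n m \<times> {\<lambda>_. 0}))"
  unfolding mu_def by (rule arg_cong[where f = Min]) force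

lemma mu_star_eq_Min_pairs: "mu_star n m = Min ((\<lambda>(W, c). MW n W c) ` (Astar n m \<times> {\<lambda>_. 0}))"
  unfolding mu_star_def by (rule arg_cong[where f = Min]) force

lemma circulant_Astar:
  assumes "1 \<le> m" "m \<le> n"
  shows "circulant n m \<in> Astar n m"
proof -
  have "wiring n (circulant n m)"
    using assms unfolding wiring_def mats_def circulant_def by auto
  moreover have "vdeg n (circulant n m) j = m" if j: "j < n" for j
  proof -
    have "{i. i < n \<and> circulant n m i j = 1} = {j..<min n (j + m)} \<union> {..<j + m - n}"
      using j assms by (auto simp: circulant_def split: if_splits)
    moreover have "card ({j..<min n (j + m)} \<union> {..<j + m - n})
        = card {j..<min n (j + m)} + card {..<j + m - n}"
      by (rule card_Un_disjoint) (use j assms in auto)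
    ultimately show ?thesis
      unfolding vdeg_def using j assms by simp
  qed
  ultimately show ?thesis unfolding Astar_def by auto
qed

lemma Astar_nonempty: "1 \<le> m \<Longrightarrow> m \<le> n \<Longrightarrow> Astar n m \<noteq> {}"
  using circulant_Astar by blast

lemma Aset_nonempty:
  assumes "1 \<le> m" "1 \<le> n"
  shows "Aset n m \<noteq> {}"
proof -
  have "circulant n 1 \<in> Astar n 1"
    using circulant_Astar assms(2) by simp
  then have "circulant n 1 \<in> Aset n m"
    using Aset_iff[of n] assms unfolding Astar_def by auto
  then show ?thesis by blast
qed

lemma zero_vecs: "(\<lambda>_. 0) \<in> vecs n"
  unfolding vecs_def by simp

theorem corollary3p3:
  fixes n1 n2 m :: nat
  assumes "1 \<le> n1" and "1 \<le> n2" and "1 \<le> m"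
  shows "mu (n1 + n2) m \<le> mu n1 m + mu n2 m
    \<and> nu (n1 + n2) m \<le> nu n1 m + nu n2 m
    \<and> (m \<le> n1 \<and> m \<le> n2 \<longrightarrow> mu_star (n1 + n2) m \<le> mu_star n1 m + mu_star n2 m)
    \<and> (m \<le> n1 \<and> m \<le> n2 \<longrightarrow> nu_star (n1 + n2) m \<le> nu_star n1 m + nu_star n2 m)"
proof (intro conjI impI)
  have A: "Aset n1 m \<noteq> {}" "Aset n2 m \<noteq> {}"
    using Aset_nonempty assms by auto
  have block_A: "block_diag n1 W1 W2 \<in> Aset (n1 + n2) m"
    if "W1 \<in> Aset n1 m" "W2 \<in> Aset n2 m" for W1 W2
    using block_diag_Aset[OF that] assms(1) by simp
  show "mu (n1 + n2) m \<le> mu n1 m + mu n2 m"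
    unfolding mu_eq_Min_pairs
    by (rule Min_MW_block_diag_le) (use A block_A vec_append_zero in auto)
  show "nu (n1 + n2) m \<le> nu n1 m + nu n2 m"
    unfolding nu_def
    by (rule Min_MW_block_diag_le) (use A zero_vecs[of n1] zero_vecs[of n2] block_A vec_append_vecs in auto)
  assume "m \<le> n1 \<and> m \<le> n2"
  then have S: "Astar n1 m \<noteq> {}" "Astar n2 m \<noteq> {}"
    using Astar_nonempty assms(3) by auto
  show "mu_star (n1 + n2) m \<le> mu_star n1 m + mu_star n2 m"
    unfolding mu_star_eq_Min_pairs
    by (rule Min_MW_block_diag_le) (use S block_diag_Astar vec_append_zero in auto)
  show "nu_star (n1 + n2) m \<le> nu_star n1 m + nu_star n2 m"
    unfolding nu_star_def
    by (rule Min_MW_block_diag_le) (use S zero_vecs[of n1] zero_vecs[of n2] block_diag_Astar vec_append_vecs in auto)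
qed

end
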